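(* For real $p$, the inequalities $$\left( \frac{\sinh x}{x}\right) ^{2p}+\left( \frac{\tanh x}{x}\right)^{p}>\left( \frac{x}{\sinh x}\right) ^{2p}+\left( \frac{x}{\tanh x}\right)^{p}>2$$ hold for all $x\in(0,\infty)$ if and only if $p\geq 3/5$. *)

theory Defs
  imports "HOL-Analysis.Analysis"
begin

end

theory Submission
  imports Defs "HOL-Real_Asymp.Real_Asymp"
begin

text \<open>Write \<open>u = x / sinh x\<close> and \<open>v = x / tanh x\<close>, so that \<open>v\<^sup>2 - x\<^sup>2 = u\<^sup>2\<close>.
  Since \<open>1/X + 1/Y < X + Y\<close> iff \<open>X Y > 1\<close>, the first inequality says
  \<open>((sinh x / x)\<^sup>3 / cosh x)\<^sup>p > 1\<close>, i.e. \<open>p > 0\<close>, because \<open>cosh x < (sinh x / x)\<^sup>3\<close>.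
  Near \<open>0\<close> the second sum is \<open>2 + p (5 p - 3) x\<^sup>4 / 45 + O(x\<^sup>6)\<close>, which forces \<open>p \<ge> 3/5\<close>;
  conversely the case \<open>p = 3/5\<close> gives all larger \<open>p\<close> by concavity of \<open>t \<mapsto> t\<^bsup>3/(5p)\<^esup>\<close>.
  For \<open>p = 3/5\<close> and \<open>x \<ge> 16/5\<close> already \<open>v\<^bsup>3/5\<^esup> > 2\<close>. For smaller \<open>x\<close>, \<open>v\<close> is bounded
  below by its \<open>[4/4]\<close> Pade approximant \<open>b\<close> (by repeated differentiation) and then
  \<open>u\<^sup>2 \<ge> b\<^sup>2 - x\<^sup>2\<close>; truncated binomial series bound both \<open>3/5\<close>-th powers below by rational
  functions of \<open>y = x\<^sup>2\<close>, and the resulting polynomial inequality on \<open>0 < y \<le> 256/25\<close> is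
  verified by a nonnegative certificate in the Bernstein basis.\<close>

lemma gbinomial_mult_power:
  fixes a e :: real
  shows "(a gchoose n) * e ^ n = (\<Prod>i<n. (a - of_nat i) * e) / fact n"
  by (simp add: gbinomial_prod_rev prod.distrib atLeast0LessThan)

lemma binomial_partial_sum_le_powr:
  fixes a e :: real
  assumes "a \<le> 0" "-1 < e" "e \<le> 0"
  shows "(\<Sum>n<N. (a gchoose n) * e ^ n) \<le> (1 + e) powr a"
proof -
  have sums: "(\<lambda>n. (a gchoose n) * e ^ n) sums (1 + e) powr a"
    by (rule gen_binomial_real) (use assms in auto)
  have "0 \<le> (a gchoose n) * e ^ n" for n
    unfolding gbinomial_mult_power using assms
    by (intro divide_nonneg_pos prod_nonneg) (auto intro: mult_nonpos_nonpos)
  then show ?thesis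
    using sum_le_suminf[OF sums_summable[OF sums] finite_lessThan, of N] sums_unique[OF sums]
    by simp
qed

lemma powr_le_binomial_partial_sum:
  fixes a e :: real
  assumes "0 \<le> a" "a \<le> 1" "-1 < e" "e \<le> 0" "0 < N"
  shows "(1 + e) powr a \<le> (\<Sum>n<N. (a gchoose n) * e ^ n)"
proof -
  have sums: "(\<lambda>n. - ((a gchoose n) * e ^ n)) sums (- ((1 + e) powr a))"
    by (intro sums_minus gen_binomial_real) (use assms in auto)
  have "0 \<le> - ((a gchoose n) * e ^ n)" if Nn: "N \<le> n" for n
  proof -
    obtain m where n: "n = Suc m" using Nn assms(5) by (cases n) auto
    have "0 \<le> (\<Prod>i<m. (a - of_nat (Suc i)) * e)"
      using assms by (intro prod_nonneg) (auto intro: mult_nonpos_nonpos)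
    moreover have "a * e \<le> 0" using assms by (simp add: mult_nonneg_nonpos)
    ultimately have "(\<Prod>i<Suc m. (a - of_nat i) * e) \<le> 0"
      unfolding prod.lessThan_Suc_shift by (simp add: mult_nonpos_nonneg)
    then show ?thesis unfolding gbinomial_mult_power n by (simp add: divide_nonpos_pos)
  qed
  then have "(\<Sum>n<N. - ((a gchoose n) * e ^ n)) \<le> - ((1 + e) powr a)"
    using sum_le_suminf[OF sums_summable[OF sums] finite_lessThan, of N] sums_unique[OF sums]
    by (simp add: not_less)
  then show ?thesis by (simp add: sum_negf)
qed

lemma poly_nonneg_if_coeffs_nonneg:
  fixes p :: "real poly"
  assumes "\<forall>c\<in>set (coeffs p). 0 \<le> c" "0 \<le> x"
  shows "0 \<le> poly p x"
  using assms
proof (induction p)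
  case (pCons a p)
  then show ?case by (cases "p = 0") (auto simp: cCons_def split: if_splits)
qed simp

lemma nonneg_if_deriv_nonneg:
  fixes f f' :: "real \<Rightarrow> real"
  assumes "f 0 = 0" "\<And>t. 0 \<le> t \<Longrightarrow> (f has_real_derivative f' t) (at t)"
    "\<And>t. 0 \<le> t \<Longrightarrow> 0 \<le> f' t" "0 \<le> x"
  shows "0 \<le> f x"
proof -
  have cont: "continuous_on {0..x} f"
    using assms(2) by (intro continuous_at_imp_continuous_on ballI) (auto intro: DERIV_isCont)
  have "f 0 \<le> f x"
  proof (rule DERIV_nonneg_imp_increasing_open[OF assms(4) _ cont])
    fix t assume "0 < t" "t < x"
    then show "\<exists>y. (f has_real_derivative y) (at t) \<and> 0 \<le> y"
      using assms(2,3)[of t] by (intro exI[of _ "f' t"]) auto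
  qed
  with assms(1) show ?thesis by simp
qed

lemma pos_if_deriv_pos_at_right_0:
  fixes f f' :: "real \<Rightarrow> real"
  assumes "(f \<longlongrightarrow> 0) (at_right 0)" "\<And>t. 0 < t \<Longrightarrow> (f has_real_derivative f' t) (at t)"
    "\<And>t. 0 < t \<Longrightarrow> 0 < f' t" "0 < x"
  shows "0 < f x"
proof -
  have mono: "f s < f t" if "0 < s" "s < t" for s t
  proof (rule DERIV_pos_imp_increasing[OF that(2)])
    fix u assume "s \<le> u" "u \<le> t"
    with that have "0 < u" by linarith
    then show "\<exists>y. DERIV f u :> y \<and> 0 < y"
      using assms(2,3)[of u] by (intro exI[of _ "f' u"]) auto
  qed
  have "eventually (\<lambda>s. f s \<le> f (x/2)) (at_right 0)"
    by (rule eventually_at_rightI[of 0 "x/2"]) (use mono assms(4) in \<open>auto intro: less_imp_le\<close>)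
  then have "0 \<le> f (x/2)" by (rule tendsto_upperbound[OF assms(1)]) simp
  with mono[of "x/2" x] assms(4) show ?thesis by linarith
qed

text \<open>The derivative of \<open>A(x) cosh x + B(x) sinh x\<close> is
  \<open>(A' + B)(x) cosh x + (B' + A)(x) sinh x\<close>, an expression of the same shape.\<close>

fun cosh_sinh_certificate :: "nat \<Rightarrow> real poly \<Rightarrow> real poly \<Rightarrow> bool" where
  "cosh_sinh_certificate 0 A B \<longleftrightarrow> (\<forall>c\<in>set (coeffs A @ coeffs B). 0 \<le> c)"
| "cosh_sinh_certificate (Suc n) A B \<longleftrightarrow>
     poly A 0 = 0 \<and> cosh_sinh_certificate n (pderiv A + B) (pderiv B + A)"

lemma cosh_sinh_certificate_nonneg:
  fixes x :: real
  assumes "cosh_sinh_certificate n A B" "0 \<le> x"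
  shows "0 \<le> poly A x * cosh x + poly B x * sinh x"
  using assms
proof (induction n arbitrary: A B x)
  case 0
  then show ?case
    by (auto intro!: add_nonneg_nonneg mult_nonneg_nonneg poly_nonneg_if_coeffs_nonneg)
next
  case (Suc n)
  show ?case
  proof (rule nonneg_if_deriv_nonneg[where f = "\<lambda>x. poly A x * cosh x + poly B x * sinh x"])
    show "0 \<le> poly (pderiv A + B) t * cosh t + poly (pderiv B + A) t * sinh t" if "0 \<le> t" for t
      using Suc.IH[of "pderiv A + B" "pderiv B + A" t] Suc.prems(1) that by simp
    show "((\<lambda>x. poly A x * cosh x + poly B x * sinh x) has_real_derivative
        poly (pderiv A + B) t * cosh t + poly (pderiv B + A) t * sinh t) (at t)" for t
      by (auto intro!: derivative_eq_intros simp: algebra_simps)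
  qed (use Suc in auto)
qed

lemma sum_gt_2_if_powr_sum_gt_2:
  fixes u v l :: real
  assumes "0 < u" "0 < v" "0 < l" "l \<le> 1" "2 < u powr l + v powr l"
  shows "2 < u + v"
proof -
  have "u powr l \<le> l * u + (1 - l)" "v powr l \<le> l * v + (1 - l)"
    using Youngs_inequality_0[of l "1 - l" _ 1] assms by simp_all
  with assms(5) have "2 * l < l * (u + v)" by (simp add: algebra_simps)
  with assms(3) show ?thesis by simp
qed

lemma inverse_sum_less_sum_iff:
  fixes X Y :: real
  assumes "0 < X" "0 < Y"
  shows "1 / X + 1 / Y < X + Y \<longleftrightarrow> 1 < X * Y"
proof -
  have "1 / X + 1 / Y = (X + Y) / (X * Y)" using assms by (simp add: field_simps)
  also have "\<dots> < X + Y \<longleftrightarrow> 1 < X * Y"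
    using assms by (simp add: divide_less_eq mult_less_cancel_left_pos)
  finally show ?thesis .
qed

definition three_fifths_lb :: "real \<Rightarrow> real" where
  "three_fifths_lb z =
    z * (1 + 2/5 * (1 - z) + 7/25 * (1 - z) ^ 2 + 28/125 * (1 - z) ^ 3 + 119/625 * (1 - z) ^ 4)"

definition three_fifths_ub :: "real \<Rightarrow> real" where
  "three_fifths_ub z = 1 - 3/5 * (1 - z) - 3/25 * (1 - z) ^ 2 - 7/125 * (1 - z) ^ 3"

lemma three_fifths_lb_le_powr:
  fixes z :: real
  assumes "0 < z" "z \<le> 1"
  shows "three_fifths_lb z \<le> z powr (3/5)"
proof -
  have "three_fifths_lb z = z * (\<Sum>n<5. (-2/5 gchoose n) * (z - 1) ^ n)"
    unfolding three_fifths_lb_def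
    by (simp add: gbinomial_prod_rev numeral_eq_Suc atLeast0LessThan lessThan_Suc) algebra
  also have "\<dots> \<le> z * (1 + (z - 1)) powr (-2/5)"
    using assms by (intro mult_left_mono binomial_partial_sum_le_powr) auto
  also have "\<dots> = z powr (3/5)" using assms by (simp add: powr_mult_base)
  finally show ?thesis .
qed

lemma powr_le_three_fifths_ub:
  fixes z :: real
  assumes "0 < z" "z \<le> 1"
  shows "z powr (3/5) \<le> three_fifths_ub z"
proof -
  have "z powr (3/5) = (1 + (z - 1)) powr (3/5)" by simp
  also have "\<dots> \<le> (\<Sum>n<4. (3/5 gchoose n) * (z - 1) ^ n)"
    using assms by (intro powr_le_binomial_partial_sum) auto
  also have "\<dots> = three_fifths_ub z"
    unfolding three_fifths_ub_def
    by (simp add: gbinomial_prod_rev numeral_eq_Suc atLeast0LessThan lessThan_Suc) algebra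
  finally show ?thesis .
qed

lemma inverse_three_fifths_ub_le_powr:
  fixes b :: real
  assumes "1 \<le> b"
  shows "1 / three_fifths_ub (1 / b) \<le> b powr (3/5)"
proof -
  have "1 / b powr (3/5) \<le> three_fifths_ub (1 / b)"
    using powr_le_three_fifths_ub[of "1 / b"] assms by (simp add: powr_divide)
  moreover have "0 < 1 / b powr (3/5)" using assms by simp
  ultimately show ?thesis
    using le_imp_inverse_le by (fastforce simp: inverse_eq_divide)
qed

text \<open>\<open>pade_num (x\<^sup>2) / pade_den (x\<^sup>2)\<close> is the \<open>[4/4]\<close> Pade approximant of \<open>x coth x\<close>.\<close>

definition pade_num :: "real \<Rightarrow> real" where
  "pade_num y = 945 + 420 * y + 15 * y ^ 2"

definition pade_den :: "real \<Rightarrow> real" where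
  "pade_den y = 945 + 105 * y + y ^ 2"

lemma pade_num_pos: "0 \<le> y \<Longrightarrow> 0 < pade_num y"
  unfolding pade_num_def by (intro add_pos_nonneg) auto

lemma pade_den_pos: "0 \<le> y \<Longrightarrow> 0 < pade_den y"
  unfolding pade_den_def by (intro add_pos_nonneg) auto

lemma pade_le_x_div_tanh:
  fixes x :: real
  assumes "0 < x"
  shows "pade_num (x ^ 2) / pade_den (x ^ 2) \<le> x / tanh x"
proof -
  have "cosh_sinh_certificate 9 [:0, 945, 0, 105, 0, 1:] [:-945, 0, -420, 0, -15:]"
    by (simp add: numeral_eq_Suc pderiv_pCons)
  from cosh_sinh_certificate_nonneg[OF this, of x] assms
  have "pade_num (x ^ 2) * sinh x \<le> x * pade_den (x ^ 2) * cosh x"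
    by (simp add: pade_num_def pade_den_def algebra_simps power_numeral_reduce)
  with assms pade_den_pos[of "x ^ 2"] show ?thesis
    by (simp add: tanh_def field_simps)
qed

text \<open>The polynomial certificates below are expansions in the Bernstein basis
  \<open>y\<^sup>i (256 - 25 y)\<^bsup>n-i\<^esup>\<close> of \<open>[0, 256/25]\<close> with nonnegative coefficients.\<close>

lemma pade_sq_minus_bounds:
  fixes y :: real
  assumes "0 \<le> y" "y \<le> 256/25"
  shows "0 < (pade_num y / pade_den y) ^ 2 - y" "(pade_num y / pade_den y) ^ 2 - y \<le> 1"
proof -
  have "34359738368 * (pade_num y ^ 2 - y * pade_den y ^ 2 - 1)
      = 27907 * (256 - 25 * y) ^ 5 + 2694575 * y * (256 - 25 * y) ^ 4 + 107941150 * y ^ 2 * (256 - 25 * y) ^ 3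
      + 2186248030 * y ^ 3 * (256 - 25 * y) ^ 2 + 22841089295 * y ^ 4 * (256 - 25 * y) + 76803881507 * y ^ 5"
    (is "_ = ?bernstein")
    unfolding pade_num_def pade_den_def by algebra
  moreover have "0 \<le> ?bernstein"
    using assms by (intro add_nonneg_nonneg mult_nonneg_nonneg zero_le_power) simp_all
  ultimately have "1 \<le> pade_num y ^ 2 - y * pade_den y ^ 2" by (simp add: zero_le_mult_iff)
  then have pos: "0 < pade_num y ^ 2 - y * pade_den y ^ 2" by linarith
  have "4294967296 * (pade_den y ^ 2 - (pade_num y ^ 2 - y * pade_den y ^ 2))
      = 297675 * y * (256 - 25 * y) ^ 4 + 31460940 * y ^ 2 * (256 - 25 * y) ^ 3 + 1277695650 * y ^ 3 * (256 - 25 * y) ^ 2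
      + 23265326476 * y ^ 4 * (256 - 25 * y) + 162666238571 * y ^ 5"
    (is "_ = ?bernstein")
    unfolding pade_num_def pade_den_def by algebra
  moreover have "0 \<le> ?bernstein"
    using assms by (intro add_nonneg_nonneg mult_nonneg_nonneg zero_le_power) simp_all
  ultimately have le: "pade_num y ^ 2 - y * pade_den y ^ 2 \<le> pade_den y ^ 2"
    by (simp add: zero_le_mult_iff)
  have eq: "(pade_num y / pade_den y) ^ 2 - y = (pade_num y ^ 2 - y * pade_den y ^ 2) / pade_den y ^ 2"
    using pade_den_pos[OF assms(1)] by (simp add: field_simps)
  show "0 < (pade_num y / pade_den y) ^ 2 - y" unfolding eq using pos pade_den_pos[OF assms(1)] by simp
  show "(pade_num y / pade_den y) ^ 2 - y \<le> 1" unfolding eq using le pade_den_pos[OF assms(1)] by simp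
qed

text \<open>\<open>L / D ^ 10\<close> and \<open>N\<^sup>3 / U\<close> are the two summands of \<open>pade_rational_sum_gt_2\<close> below.\<close>

lemma pade_gap_certificate:
  fixes y :: real
  assumes "0 < y" "y \<le> 256/25"
  defines "N \<equiv> pade_num y" and "D \<equiv> pade_den y"
  defines "A \<equiv> N ^ 2 - y * D ^ 2"
  defines "L \<equiv> A * (D ^ 8 + 2/5 * (D ^ 2 - A) * D ^ 6 + 7/25 * (D ^ 2 - A) ^ 2 * D ^ 4
      + 28/125 * (D ^ 2 - A) ^ 3 * D ^ 2 + 119/625 * (D ^ 2 - A) ^ 4)"
    and "U \<equiv> N ^ 3 - 3/5 * (N - D) * N ^ 2 - 3/25 * (N - D) ^ 2 * N - 7/125 * (N - D) ^ 3"
  shows "2 * D ^ 10 * U < L * U + N ^ 3 * D ^ 10"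
proof -
  have eq: "2106245833371143733958360553673408646377901908010982225086219550720000000
        * (L * U + N ^ 3 * D ^ 10 - 2 * D ^ 10 * U)
      = y ^ 3 * (2106245833371143733958360553673408646377901908010982225086219550720000000 + (76080430461735233174031383825683593671875 * (256 - 25 * y) ^ 28 + 84878709575576792139312702079658203070312500 * y * (256 - 25 * y) ^ 27
      + 43645016037944540900410183319545538067480468750 * y ^ 2 * (256 - 25 * y) ^ 26 + 13812140600637630675958504937794033996391601562500 * y ^ 3 * (256 - 25 * y) ^ 25
      + 3032532243692003212150161270256541488719547119140625 * y ^ 4 * (256 - 25 * y) ^ 24 + 493847589882208783222060736375157751201980779296875000 * y ^ 5 * (256 - 25 * y) ^ 23
      + 62293819367710342870678728094642680479029535895117187500 * y ^ 6 * (256 - 25 * y) ^ 22 + 6279023696726810277341008396388553757624564789129921875000 * y ^ 7 * (256 - 25 * y) ^ 21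
      + 518341408049733925395132677565659235497280678102520248046875 * y ^ 8 * (256 - 25 * y) ^ 20 + 35803596750877174196911559146718683121721640441893081435937500 * y ^ 9 * (256 - 25 * y) ^ 19
      + 2112199677484282849860484819498499768234865692198728401277031250 * y ^ 10 * (256 - 25 * y) ^ 18 + 108643928418561019285635823069502972697213901059000877384614187500 * y ^ 11 * (256 - 25 * y) ^ 17
      + 4970547798466472281390426825764810206768689646410103183408994140625 * y ^ 12 * (256 - 25 * y) ^ 16 + 205560258223400746998221072147191102358866348476746320072584396450000 * y ^ 13 * (256 - 25 * y) ^ 15
      + 7746734206010976154606085633759369228836455258591241264340336040225000 * y ^ 14 * (256 - 25 * y) ^ 14 + 265443713441410075986825607881171503907755847306486862154498853847170000 * y ^ 15 * (256 - 25 * y) ^ 13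
      + 8181552095931104120610195358843707515012269128804204431129834710221800625 * y ^ 16 * (256 - 25 * y) ^ 12 + 223480737443015105957170486908589191501043120369403606588467811666836099500 * y ^ 17 * (256 - 25 * y) ^ 11
      + 5327677549078569869750562576635837288352990564271313846178656151156068375250 * y ^ 18 * (256 - 25 * y) ^ 10 + 109290497054179652770377640801926285864096893014495885666085316748587072476700 * y ^ 19 * (256 - 25 * y) ^ 9
      + 1903793286497235288860588043997382796205084843091547773947357595040702939130875 * y ^ 20 * (256 - 25 * y) ^ 8 + 27782373064520755487567393001002876672932385044779096949534267744694783363791800 * y ^ 21 * (256 - 25 * y) ^ 7
      + 334430315576100239937535016899012322752424363497660064192912462565287886588969900 * y ^ 22 * (256 - 25 * y) ^ 6 + 3256414073476874525739907215898961452125215195055513760527806494051083247355491960 * y ^ 23 * (256 - 25 * y) ^ 5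
      + 24973539288961719968941835486347306043113030310522980111105924512174008371543518577 * y ^ 24 * (256 - 25 * y) ^ 4 + 145045679006336533067523221024528971133536154352823675356231525466169771491751058628 * y ^ 25 * (256 - 25 * y) ^ 3
      + 599075334576051699567099934508695300903664278368797739840129544271954471283693985422 * y ^ 26 * (256 - 25 * y) ^ 2 + 1566373740359701460170850114739717273789705656089177893535102488327758153496564692468 * y ^ 27 * (256 - 25 * y)
      + 1946935505157200281743347547297838008556711607593898491619180982940591567734240687907 * y ^ 28))"
    (is "?K * ?gap = y ^ 3 * (_ + ?bernstein)")
    unfolding L_def U_def A_def N_def D_def pade_num_def pade_den_def by algebra
  have "0 \<le> ?bernstein"
    using assms by (intro add_nonneg_nonneg mult_nonneg_nonneg zero_le_power) simp_all
  then have "0 < y ^ 3 * (?K + ?bernstein)"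
    using assms(1) by (intro mult_pos_pos add_pos_nonneg) simp_all
  then have "0 < ?K * ?gap"
    by (simp only: eq)
  then show ?thesis by (simp add: zero_less_mult_iff)
qed

lemma pade_rational_sum_gt_2:
  fixes y :: real
  assumes "0 < y" "y \<le> 256/25"
  shows "2 < three_fifths_lb ((pade_num y / pade_den y) ^ 2 - y)
           + 1 / three_fifths_ub (pade_den y / pade_num y)"
proof -
  define N D where "N = pade_num y" and "D = pade_den y"
  define A where "A = N ^ 2 - y * D ^ 2"
  define L where "L = A * (D ^ 8 + 2/5 * (D ^ 2 - A) * D ^ 6 + 7/25 * (D ^ 2 - A) ^ 2 * D ^ 4
      + 28/125 * (D ^ 2 - A) ^ 3 * D ^ 2 + 119/625 * (D ^ 2 - A) ^ 4)"
  define U where "U = N ^ 3 - 3/5 * (N - D) * N ^ 2 - 3/25 * (N - D) ^ 2 * N - 7/125 * (N - D) ^ 3"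
  have N: "0 < N" and D: "0 < D"
    using assms(1) pade_num_pos pade_den_pos unfolding N_def D_def by simp_all
  have "A = ((N / D) ^ 2 - y) * D ^ 2" unfolding A_def using D by (simp add: field_simps)
  then have "L = three_fifths_lb ((N / D) ^ 2 - y) * D ^ 10"
    unfolding L_def three_fifths_lb_def by algebra
  then have lower: "three_fifths_lb ((N / D) ^ 2 - y) = L / D ^ 10" using D by simp
  have "N - D = (1 - D / N) * N" using N by (simp add: field_simps)
  then have "U = three_fifths_ub (D / N) * N ^ 3"
    unfolding U_def three_fifths_ub_def by algebra
  then have upper: "three_fifths_ub (D / N) = U / N ^ 3" using N by simp
  have "U = 843908625 + 956429775 * y + 371498400 * y ^ 2 + 56691873 * y ^ 3
      + 17979192/5 * y ^ 4 + 2475207/25 * y ^ 5 + 122317/125 * y ^ 6"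
    unfolding U_def N_def D_def pade_num_def pade_den_def by algebra
  then have U: "0 < U" using assms(1) by (simp add: add_pos_nonneg)
  have "2 * D ^ 10 * U < L * U + N ^ 3 * D ^ 10"
    unfolding L_def U_def A_def N_def D_def by (rule pade_gap_certificate[OF assms])
  then show ?thesis
    unfolding N_def[symmetric] D_def[symmetric] lower upper using D N U by (simp add: field_simps)
qed

lemma x_div_tanh_sq_minus_sq:
  fixes x :: real
  assumes "x \<noteq> 0"
  shows "(x / tanh x) ^ 2 - x ^ 2 = (x / sinh x) ^ 2"
proof -
  have "(x / tanh x) ^ 2 - x ^ 2 = x ^ 2 * (cosh x ^ 2 - sinh x ^ 2) / sinh x ^ 2"
    using assms by (simp add: tanh_def field_simps)
  also have "\<dots> = (x / sinh x) ^ 2" by (simp add: cosh_square_eq power_divide)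
  finally show ?thesis .
qed

lemma x_less_x_div_tanh:
  fixes x :: real
  assumes "0 < x"
  shows "x < x / tanh x"
  using assms tanh_real_lt_1[of x] by (simp add: less_divide_eq)

lemma three_fifths_sum_gt_2_small:
  fixes x :: real
  assumes "0 < x" "x < 16/5"
  shows "2 < ((x / sinh x) ^ 2) powr (3/5) + (x / tanh x) powr (3/5)"
proof -
  define y where "y = x ^ 2"
  define b where "b = pade_num y / pade_den y"
  define a where "a = b ^ 2 - y"
  have y: "0 < y" "y \<le> 256/25"
    unfolding y_def using assms power_strict_mono[of x "16/5" 2] by (auto simp: power2_eq_square)
  have b_le: "b \<le> x / tanh x" unfolding b_def y_def by (rule pade_le_x_div_tanh[OF assms(1)])
  have b_ge: "1 \<le> b"
    unfolding b_def using y pade_den_pos[of y] by (simp add: pade_num_def pade_den_def)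
  have a: "0 < a" "a \<le> 1" unfolding a_def b_def using pade_sq_minus_bounds[of y] y by simp_all
  have "a \<le> (x / tanh x) ^ 2 - x ^ 2"
    unfolding a_def y_def using b_le b_ge by (simp add: power_mono)
  then have a_le: "a \<le> (x / sinh x) ^ 2" using assms x_div_tanh_sq_minus_sq by simp
  have "three_fifths_lb a \<le> ((x / sinh x) ^ 2) powr (3/5)"
    using three_fifths_lb_le_powr[OF a] powr_mono2[of "3/5" a] a a_le by fastforce
  moreover have "1 / three_fifths_ub (1 / b) \<le> (x / tanh x) powr (3/5)"
    using inverse_three_fifths_ub_le_powr[OF b_ge] powr_mono2[of "3/5" b] b_ge b_le by fastforce
  moreover have "2 < three_fifths_lb a + 1 / three_fifths_ub (1 / b)"
    unfolding a_def b_def using pade_rational_sum_gt_2[OF y] by simp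
  ultimately show ?thesis by linarith
qed

lemma three_fifths_sum_gt_2_large:
  fixes x :: real
  assumes "16/5 \<le> x"
  shows "2 < (x / tanh x) powr (3/5)"
proof -
  define v where "v = x / tanh x"
  have "x < v" unfolding v_def by (rule x_less_x_div_tanh) (use assms in linarith)
  with assms have "16/5 < v" by linarith
  then have "(2::real) ^ 5 < v ^ 3"
    using power_strict_mono[of "16/5" v 3] by (simp add: power3_eq_cube)
  also have "v ^ 3 = (v powr (3/5)) ^ 5" using \<open>16/5 < v\<close> by (simp add: powr_power)
  finally show ?thesis unfolding v_def by (rule power_less_imp_less_base) simp
qed

lemma three_fifths_sum_gt_2:
  fixes x :: real
  assumes "0 < x"
  shows "2 < ((x / sinh x) ^ 2) powr (3/5) + (x / tanh x) powr (3/5)"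
proof (cases "x < 16/5")
  case True
  then show ?thesis using three_fifths_sum_gt_2_small[OF assms] by simp
next
  case False
  then show ?thesis
    using three_fifths_sum_gt_2_large[of x] powr_ge_zero[of "(x / sinh x) ^ 2" "3/5"] by linarith
qed

lemma sinh_tanh_powr_sum_gt_2:
  fixes x p :: real
  assumes "0 < x" "3/5 \<le> p"
  shows "2 < (x / sinh x) powr (2 * p) + (x / tanh x) powr p"
proof -
  have pos: "0 < x / sinh x" "0 < x / tanh x" using assms(1) by simp_all
  have "(x / sinh x) powr (2 * p) = ((x / sinh x) powr 2) powr p" by (simp add: powr_powr)
  also have "\<dots> = ((x / sinh x) ^ 2) powr p" using pos by simp
  finally have "(x / sinh x) powr (2 * p) = ((x / sinh x) ^ 2) powr p" .
  moreover have "2 < (((x / sinh x) ^ 2) powr p) powr (3/5 / p) + ((x / tanh x) powr p) powr (3/5 / p)"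
    using three_fifths_sum_gt_2[OF assms(1)] assms(2) by (simp add: powr_powr)
  ultimately show ?thesis
    using sum_gt_2_if_powr_sum_gt_2[of "((x / sinh x) ^ 2) powr p" "(x / tanh x) powr p" "3/5 / p"]
      pos assms by simp
qed

lemma sinh_less_x_mult_cosh:
  fixes x :: real
  assumes "0 < x"
  shows "sinh x < x * cosh x"
proof -
  have "0 < x * cosh x - sinh x"
  proof (rule pos_if_deriv_pos_at_right_0[where f = "\<lambda>x. x * cosh x - sinh x" and f' = "\<lambda>t. t * sinh t"])
    show "((\<lambda>x::real. x * cosh x - sinh x) \<longlongrightarrow> 0) (at_right 0)"
      by (rule tendsto_eq_intros refl | simp)+
    show "((\<lambda>x. x * cosh x - sinh x) has_real_derivative t * sinh t) (at t)" for t :: real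
      by (rule derivative_eq_intros refl | simp)+
  qed (use assms in simp_all)
  then show ?thesis by simp
qed

lemma three_sinh_mult_cosh_less:
  fixes x :: real
  assumes "0 < x"
  shows "3 * sinh x * cosh x < x * (2 * cosh x ^ 2 + 1)"
proof -
  have "0 < x * (2 * cosh x ^ 2 + 1) - 3 * sinh x * cosh x"
  proof (rule pos_if_deriv_pos_at_right_0[where f = "\<lambda>x. x * (2 * cosh x ^ 2 + 1) - 3 * sinh x * cosh x"
        and f' = "\<lambda>t. 4 * sinh t * (t * cosh t - sinh t)"])
    show "((\<lambda>x::real. x * (2 * cosh x ^ 2 + 1) - 3 * sinh x * cosh x) \<longlongrightarrow> 0) (at_right 0)"
      by (rule tendsto_eq_intros refl | simp)+
    show "((\<lambda>x. x * (2 * cosh x ^ 2 + 1) - 3 * sinh x * cosh x) has_real_derivative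
        4 * sinh t * (t * cosh t - sinh t)) (at t)" for t :: real
      by (rule derivative_eq_intros refl)+ (insert cosh_square_eq[of t], simp, algebra)
    show "0 < 4 * sinh t * (t * cosh t - sinh t)" if "0 < t" for t :: real
      using sinh_less_x_mult_cosh[OF that] that by simp
  qed (use assms in simp)
  then show ?thesis by simp
qed

lemma cosh_less_sinh_div_cube:
  fixes x :: real
  assumes "0 < x"
  shows "cosh x < (sinh x / x) ^ 3"
proof -
  define F where "F t = 3 * ln (sinh t) - 3 * ln t - ln (cosh t)" for t :: real
  have "0 < F x"
  proof (rule pos_if_deriv_pos_at_right_0[OF _ _ _ assms])
    show "(F \<longlongrightarrow> 0) (at_right 0)" unfolding F_def by real_asymp
    fix t :: real
    assume t: "0 < t"
    then show "(F has_real_derivative 3 * cosh t / sinh t - 3 / t - sinh t / cosh t) (at t)"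
      unfolding F_def by (auto intro!: derivative_eq_intros)
    have "3 * cosh t / sinh t - 3 / t - sinh t / cosh t
        = (t * (2 * cosh t ^ 2 + 1) - 3 * sinh t * cosh t) / (t * sinh t * cosh t)"
      using t by (simp add: field_simps) (use cosh_square_eq[of t] in algebra)
    with t three_sinh_mult_cosh_less[OF t]
    show "0 < 3 * cosh t / sinh t - 3 / t - sinh t / cosh t" by simp
  qed
  then have "ln (cosh x) < 3 * ln (sinh x / x)" unfolding F_def using assms by (simp add: ln_div)
  also have "\<dots> = ln ((sinh x / x) ^ 3)" using assms by (simp add: ln_realpow)
  finally show ?thesis using assms by simp
qed

lemma sinh_tanh_powr_sum_less_iff:
  fixes x p :: real
  assumes "0 < x"
  shows "(x / sinh x) powr (2 * p) + (x / tanh x) powr p < (sinh x / x) powr (2 * p) + (tanh x / x) powr p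
    \<longleftrightarrow> 0 < p"
proof -
  define X Y where "X = (sinh x / x) powr (2 * p)" and "Y = (tanh x / x) powr p"
  have pos: "0 < sinh x / x" "0 < tanh x / x" using assms by simp_all
  have "X = ((sinh x / x) powr 2) powr p" unfolding X_def by (simp add: powr_powr)
  also have "\<dots> = ((sinh x / x) ^ 2) powr p" using pos by simp
  finally have "X * Y = ((sinh x / x) ^ 2 * (tanh x / x)) powr p"
    unfolding Y_def by (simp only: powr_mult)
  also have "(sinh x / x) ^ 2 * (tanh x / x) = (sinh x / x) ^ 3 / cosh x"
    by (simp add: tanh_def power3_eq_cube power2_eq_square)
  finally have XY: "X * Y = ((sinh x / x) ^ 3 / cosh x) powr p" .
  have B: "1 < (sinh x / x) ^ 3 / cosh x"
    using cosh_less_sinh_div_cube[OF assms] by simp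
  then have "((sinh x / x) ^ 3 / cosh x) powr 0 = 1" using assms by simp
  then have "1 < X * Y \<longleftrightarrow> 0 < p"
    unfolding XY using powr_less_cancel_iff[OF B, of 0 p] by (simp only:)
  moreover have "(x / sinh x) powr (2 * p) = 1 / X" "(x / tanh x) powr p = 1 / Y"
    unfolding X_def Y_def using pos assms by (simp_all add: powr_divide)
  moreover have "0 < X" "0 < Y" unfolding X_def Y_def using pos assms by simp_all
  ultimately show ?thesis using inverse_sum_less_sum_iff[of X Y] by (simp add: X_def Y_def)
qed

lemma sinh_tanh_powr_sum_not_gt_2:
  fixes p :: real
  assumes "0 < p" "p < 3/5"
  shows "\<exists>x>0. \<not> 2 < (x / sinh x) powr (2 * p) + (x / tanh x) powr p"
proof -
  define S where "S x = (x / sinh x) powr (2 * p) + (x / tanh x) powr p" for x :: real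
  \<comment> \<open>\<open>S x = 2 + p (5 p - 3) x\<^sup>4 / 45 + O(x\<^sup>6)\<close> as \<open>x \<rightarrow> 0\<close>\<close>
  have "((\<lambda>x. (S x - 2) / x ^ 4) \<longlongrightarrow> p / 60 + ((2 * p - 1) * p / 36 + (p - 1) * p / 18)) (at_right 0)"
    unfolding S_def using assms by real_asymp
  moreover have "p / 60 + ((2 * p - 1) * p / 36 + (p - 1) * p / 18) < 0"
    using assms by (simp add: field_simps mult_pos_neg)
  ultimately have "eventually (\<lambda>x. (S x - 2) / x ^ 4 < 0) (at_right 0)"
    by (rule order_tendstoD(2))
  then obtain b where "0 < b" and b: "\<And>x. 0 < x \<Longrightarrow> x < b \<Longrightarrow> (S x - 2) / x ^ 4 < 0"
    unfolding eventually_at_right_field by auto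
  then have "S (b / 2) < 2" using b[of "b / 2"] by (simp add: divide_less_0_iff)
  with \<open>0 < b\<close> show ?thesis unfolding S_def by (intro exI[of _ "b / 2"]) simp
qed

theorem corollary4p11:
  fixes p :: real
  shows "(\<forall>x::real. x > 0 \<longrightarrow>
            (sinh x / x) powr (2 * p) + (tanh x / x) powr p
              > (x / sinh x) powr (2 * p) + (x / tanh x) powr p
          \<and> (x / sinh x) powr (2 * p) + (x / tanh x) powr p > 2)
         \<longleftrightarrow> p \<ge> 3 / 5"
proof
  assume H: "\<forall>x::real. x > 0 \<longrightarrow>
            (sinh x / x) powr (2 * p) + (tanh x / x) powr p
              > (x / sinh x) powr (2 * p) + (x / tanh x) powr p
          \<and> (x / sinh x) powr (2 * p) + (x / tanh x) powr p > 2"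
  then have "0 < p"
    using sinh_tanh_powr_sum_less_iff[of 1 p] conjunct1[OF H[rule_format, of 1]] by simp
  show "3/5 \<le> p"
  proof (rule ccontr)
    assume "\<not> 3/5 \<le> p"
    with \<open>0 < p\<close> H show False using sinh_tanh_powr_sum_not_gt_2[of p] by auto
  qed
next
  assume "3/5 \<le> p"
  then show "\<forall>x::real. x > 0 \<longrightarrow>
            (sinh x / x) powr (2 * p) + (tanh x / x) powr p
              > (x / sinh x) powr (2 * p) + (x / tanh x) powr p
          \<and> (x / sinh x) powr (2 * p) + (x / tanh x) powr p > 2"
    using sinh_tanh_powr_sum_less_iff[of _ p] sinh_tanh_powr_sum_gt_2[of _ p] by simp
qed

end
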